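(* Let $k\geq 3$ and let $0<c<\frac{1}{k(k-1)}$. Then there exists $\gamma>0$ such that, with probability $1-o(1)$ as $n\to\infty$, a random instance $\Phi$ of 1-in-$k$ SAT with $n$ variables and $cn$ clauses has the property that every two satisfying assignments of $\Phi$ are $\lfloor\gamma\log n\rfloor$-connected.
   Context: An instance of 1-in-$k$ SAT is a conjunction of clauses, each consisting of exactly $k$ literals on $k$ distinct variables from $x_1,\dots,x_n$; an assignment $A\in\{0,1\}^n$ satisfies the instance if in every clause exactly one literal is true. A random instance with $n$ variables and $cn$ clauses consists of $cn$ clauses, each chosen independently and uniformly at random from the $2^k\binom{n}{k}$ possible clauses (a set of $k$ distinct variables together with a choice of sign for each). For an integer $l\geq 1$, two satisfying assignments $A,B$ of $\Phi$ are $l$-connected if there is a sequence of satisfying assignments $A_0=A,A_1,\dots,A_r=B$ of $\Phi$ such that $A_i$ and $A_{i+1}$ are at Hamming distance at most $l$ for every $i$. *)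

theory Defs
  imports "HOL-Probability.Probability"
begin

text \<open>A literal is a pair (variable index, sign); literal (v,s) is true under A iff A v = s.
  Variables are x_0, ..., x_(n-1) (indices below n).\<close>
type_synonym literal = "nat \<times> bool"
type_synonym clause = "literal set"

text \<open>The 2^k (n choose k) possible clauses: k literals on k distinct variables.\<close>
definition clauses :: "nat \<Rightarrow> nat \<Rightarrow> clause set" where
  "clauses n k = {C. finite C \<and> card C = k \<and> card (fst ` C) = k \<and> fst ` C \<subseteq> {..<n}}"

text \<open>Assignments in {0,1}^n, represented as functions that are False outside {..<n}.\<close>
definition assignments :: "nat \<Rightarrow> (nat \<Rightarrow> bool) set" where
  "assignments n = {A. \<forall>i\<ge>n. \<not> A i}"

definition lit_true :: "(nat \<Rightarrow> bool) \<Rightarrow> literal \<Rightarrow> bool" where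
  "lit_true A l = (A (fst l) = snd l)"

definition satisfies_1ink :: "(nat \<Rightarrow> bool) \<Rightarrow> clause list \<Rightarrow> bool" where
  "satisfies_1ink A \<Phi> = (\<forall>C\<in>set \<Phi>. card {l\<in>C. lit_true A l} = 1)"

definition sat_assignments :: "nat \<Rightarrow> clause list \<Rightarrow> (nat \<Rightarrow> bool) set" where
  "sat_assignments n \<Phi> = {A \<in> assignments n. satisfies_1ink A \<Phi>}"

definition hamming :: "nat \<Rightarrow> (nat \<Rightarrow> bool) \<Rightarrow> (nat \<Rightarrow> bool) \<Rightarrow> nat" where
  "hamming n A B = card {i. i < n \<and> A i \<noteq> B i}"

definition l_connected ::
  "nat \<Rightarrow> clause list \<Rightarrow> nat \<Rightarrow> (nat \<Rightarrow> bool) \<Rightarrow> (nat \<Rightarrow> bool) \<Rightarrow> bool" where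
  "l_connected n \<Phi> l A B =
     (\<exists>As. As \<noteq> [] \<and> hd As = A \<and> last As = B \<and>
        set As \<subseteq> sat_assignments n \<Phi> \<and>
        (\<forall>i. Suc i < length As \<longrightarrow> hamming n (As ! i) (As ! Suc i) \<le> l))"

text \<open>Random instance: m clauses chosen independently uniformly, i.e. the uniform
  distribution on lists of length m of clauses.\<close>
definition instances :: "nat \<Rightarrow> nat \<Rightarrow> nat \<Rightarrow> clause list set" where
  "instances n k m = {\<Phi>. length \<Phi> = m \<and> set \<Phi> \<subseteq> clauses n k}"

definition random_1ink :: "nat \<Rightarrow> nat \<Rightarrow> nat \<Rightarrow> clause list pmf" where
  "random_1ink n k m = pmf_of_set (instances n k m)"

end

theory Submission
  imports Defs "HOL-Combinatorics.Transposition"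
begin

(* Call two variables adjacent if they occur together in some clause of \<Phi>, and let
   component \<Phi> v be the connected component of v in this co-occurrence graph.  Every clause
   lies inside a single component, so if A and B satisfy \<Phi>, switching the values of A to
   those of B one component at a time passes through satisfying assignments only, and
   consecutive ones differ on one component.  Hence, if all components have at most L
   variables, all satisfying assignments are L-connected (small_components_connected).
   The main work is to show that for c < 1/(k(k-1)) all components have O(log n) variables
   with high probability.  We explore the component of v vertex by vertex (explore); it has
   at most 1 + (k-1)r variables, r the number of clauses revealed (large_component_explore).
   A first-moment computation, by induction on the exploration depth, bounds the sum of
   \<lambda>^(revealed clauses) over all instances (explore_moment_bound), using that a variable
   lies in a k/n fraction of all clauses (card_clauses_containing).  With \<lambda> = 1/x,
   x = ck(k-1) < 1, this gives P(|component v| > L) \<le> K e^(-\<delta>L) for some \<delta> > 0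
   (prob_large_component), and L = \<lfloor>(2/\<delta>) ln n\<rfloor> together with a union bound over the
   n variables yields failure probability O(1/n) (prob_small_components). *)

section \<open>Sums over lists of fixed length\<close>

abbreviation lists_len :: "'a set \<Rightarrow> nat \<Rightarrow> 'a list set" where
  "lists_len A m \<equiv> {xs. set xs \<subseteq> A \<and> length xs = m}"

lemma sum_lists_len_Suc:
  assumes "finite A"
  shows "(\<Sum>xs\<in>lists_len A (Suc m). f xs) = (\<Sum>x\<in>A. \<Sum>xs\<in>lists_len A m. f (x#xs))"
proof -
  have inj: "inj_on (\<lambda>(xs, x). x#xs) (lists_len A m \<times> A)" by (auto simp: inj_on_def)
  have "(\<Sum>xs\<in>lists_len A (Suc m). f xs) = (\<Sum>p\<in>lists_len A m \<times> A. f (snd p # fst p))"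
    unfolding lists_length_Suc_eq by (subst sum.reindex[OF inj]) (auto simp: case_prod_beta)
  also have "\<dots> = (\<Sum>xs\<in>lists_len A m. \<Sum>x\<in>A. f (x#xs))"
    by (subst sum.cartesian_product) (simp add: case_prod_beta)
  also have "\<dots> = (\<Sum>x\<in>A. \<Sum>xs\<in>lists_len A m. f (x#xs))"
    by (rule sum.swap)
  finally show ?thesis .
qed

text \<open>This is the engine of the
  first-moment computation for the exploration process.\<close>
lemma sum_lists_len_filter_le:
  fixes h :: "'a list \<Rightarrow> 'a list \<Rightarrow> real" and lam K c0 :: real
  assumes fin: "finite A" and lam: "lam \<ge> 0"
    and hyp: "\<And>T j. (\<Sum>R\<in>lists_len {x\<in>A. \<not> P x} j. h T R) \<le> c0 * K ^ j"
  shows "(\<Sum>\<Phi>\<in>lists_len A m. lam ^ length (filter P \<Phi>) * h (filter P \<Phi>) (filter (\<lambda>x. \<not> P x) \<Phi>))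
          \<le> c0 * (lam * card {x\<in>A. P x} + K) ^ m"
  using hyp
proof (induction m arbitrary: h c0)
  case 0
  have "lists_len A 0 = {[]}" "lists_len {x\<in>A. \<not> P x} 0 = {[]}" by auto
  then show ?case using "0.prems"[of "[]" 0] by simp
next
  case (Suc m)
  define Q where "Q = {x\<in>A. P x}"
  define B where "B = {x\<in>A. \<not> P x}"
  define X where "X = lam * card Q + K"
  have finQ: "finite Q" and finB: "finite B" using fin by (auto simp: Q_def B_def)
  have AQB: "A = Q \<union> B" "Q \<inter> B = {}" by (auto simp: Q_def B_def)
  let ?g = "\<lambda>\<Phi>. lam ^ length (filter P \<Phi>) * h (filter P \<Phi>) (filter (\<lambda>x. \<not> P x) \<Phi>)"
  have "(\<Sum>\<Phi>\<in>lists_len A (Suc m). ?g \<Phi>) = (\<Sum>x\<in>A. \<Sum>\<Phi>\<in>lists_len A m. ?g (x#\<Phi>))"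
    by (rule sum_lists_len_Suc[OF fin])
  also have "\<dots> = (\<Sum>x\<in>Q. \<Sum>\<Phi>\<in>lists_len A m. ?g (x#\<Phi>)) + (\<Sum>x\<in>B. \<Sum>\<Phi>\<in>lists_len A m. ?g (x#\<Phi>))"
    using AQB finQ finB by (simp add: sum.union_disjoint)
  also have "(\<Sum>x\<in>Q. \<Sum>\<Phi>\<in>lists_len A m. ?g (x#\<Phi>)) \<le> (\<Sum>x\<in>Q. lam * (c0 * X ^ m))"
  proof (rule sum_mono)
    fix x assume x: "x \<in> Q"
    have "(\<Sum>\<Phi>\<in>lists_len A m. ?g (x#\<Phi>)) = lam * (\<Sum>\<Phi>\<in>lists_len A m.
            lam ^ length (filter P \<Phi>) * h (x # filter P \<Phi>) (filter (\<lambda>x. \<not> P x) \<Phi>))"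
      using x by (simp add: Q_def sum_distrib_left mult_ac)
    also have "\<dots> \<le> lam * (c0 * X ^ m)"
      using Suc.IH[of "\<lambda>T R. h (x#T) R" c0] Suc.prems lam
      by (intro mult_left_mono) (auto simp: X_def Q_def)
    finally show "(\<Sum>\<Phi>\<in>lists_len A m. ?g (x#\<Phi>)) \<le> lam * (c0 * X ^ m)" .
  qed
  also have "(\<Sum>x\<in>B. \<Sum>\<Phi>\<in>lists_len A m. ?g (x#\<Phi>)) = (\<Sum>\<Phi>\<in>lists_len A m.
      lam ^ length (filter P \<Phi>) * (\<Sum>x\<in>B. h (filter P \<Phi>) (x # filter (\<lambda>x. \<not> P x) \<Phi>)))"
    by (subst sum.swap) (auto simp: B_def sum_distrib_left intro!: sum.cong)
  also have "\<dots> \<le> (c0 * K) * X ^ m"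
  proof -
    have "(\<Sum>R\<in>lists_len B j. \<Sum>x\<in>B. h T (x # R)) \<le> (c0 * K) * K ^ j" for T j
    proof -
      have "(\<Sum>R\<in>lists_len B j. \<Sum>x\<in>B. h T (x # R)) = (\<Sum>R\<in>lists_len B (Suc j). h T R)"
        by (subst sum_lists_len_Suc[OF finB]) (rule sum.swap)
      also have "\<dots> \<le> c0 * K ^ Suc j" using Suc.prems[of T "Suc j"] by (simp add: B_def)
      finally show ?thesis by (simp add: mult_ac)
    qed
    then show ?thesis
      using Suc.IH[of "\<lambda>T R. \<Sum>x\<in>B. h T (x # R)" "c0 * K"] by (simp add: X_def Q_def B_def)
  qed
  finally have "(\<Sum>\<Phi>\<in>lists_len A (Suc m). ?g \<Phi>) \<le> card Q * (lam * (c0 * X ^ m)) + c0 * K * X ^ m"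
    by simp
  also have "\<dots> = c0 * X ^ Suc m" by (simp add: X_def algebra_simps)
  finally show ?case by (simp add: X_def Q_def)
qed

section \<open>Components of the variable co-occurrence graph\<close>

definition co_occur :: "clause list \<Rightarrow> (nat \<times> nat) set" where
  "co_occur \<Phi> = {(a,b). \<exists>C\<in>set \<Phi>. a \<in> fst ` C \<and> b \<in> fst ` C}"

definition component :: "clause list \<Rightarrow> nat \<Rightarrow> nat set" where
  "component \<Phi> v = {w. (v,w) \<in> (co_occur \<Phi>)\<^sup>*}"

lemma component_self: "v \<in> component \<Phi> v"
  by (simp add: component_def)

lemma clause_in_component:
  "a \<in> component \<Phi> v \<Longrightarrow> C \<in> set \<Phi> \<Longrightarrow> a \<in> fst ` C \<Longrightarrow> fst ` C \<subseteq> component \<Phi> v"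
  unfolding component_def co_occur_def by (auto intro: rtrancl_into_rtrancl)

lemma component_subset_closed:
  assumes "v \<in> D" and closed: "\<And>C. C \<in> set \<Phi> \<Longrightarrow> fst ` C \<inter> D \<noteq> {} \<Longrightarrow> fst ` C \<subseteq> D"
  shows "component \<Phi> v \<subseteq> D"
proof
  fix w assume "w \<in> component \<Phi> v"
  then have "(v,w) \<in> (co_occur \<Phi>)\<^sup>*" by (simp add: component_def)
  then show "w \<in> D"
  proof (induction rule: rtrancl_induct)
    case (step a b)
    then obtain C where "C \<in> set \<Phi>" "a \<in> fst ` C" "b \<in> fst ` C" by (auto simp: co_occur_def)
    then show ?case using closed step.IH by blast
  qed (fact assms(1))
qed

lemma component_subset:
  assumes "set \<Phi> \<subseteq> clauses n k" shows "component \<Phi> v \<subseteq> insert v {..<n}"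
  using assms by (intro component_subset_closed) (auto simp: clauses_def)

lemma finite_component: "set \<Phi> \<subseteq> clauses n k \<Longrightarrow> finite (component \<Phi> v)"
  using component_subset by (meson finite_insert finite_lessThan finite_subset)

section \<open>Small components imply connectivity of the solution space\<close>

definition switch_on :: "nat set \<Rightarrow> (nat \<Rightarrow> bool) \<Rightarrow> (nat \<Rightarrow> bool) \<Rightarrow> nat \<Rightarrow> bool" where
  "switch_on U A B = (\<lambda>i. if i \<in> U then B i else A i)"

text \<open>If no clause straddles U, switching the two solutions on U gives a solution: each
  clause sees either only A or only B.\<close>
lemma switch_on_sat:
  assumes A: "A \<in> sat_assignments n \<Phi>" and B: "B \<in> sat_assignments n \<Phi>"
    and closed: "\<And>C. C \<in> set \<Phi> \<Longrightarrow> fst ` C \<inter> U \<noteq> {} \<Longrightarrow> fst ` C \<subseteq> U"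
  shows "switch_on U A B \<in> sat_assignments n \<Phi>"
proof -
  have "switch_on U A B \<in> assignments n"
    using A B by (auto simp: sat_assignments_def assignments_def switch_on_def)
  moreover have "card {l\<in>C. lit_true (switch_on U A B) l} = 1" if C: "C \<in> set \<Phi>" for C
  proof (cases "fst ` C \<inter> U = {}")
    case True
    then have "{l\<in>C. lit_true (switch_on U A B) l} = {l\<in>C. lit_true A l}"
      by (force simp: switch_on_def lit_true_def)
    then show ?thesis using A C by (simp add: sat_assignments_def satisfies_1ink_def)
  next
    case False
    then have "{l\<in>C. lit_true (switch_on U A B) l} = {l\<in>C. lit_true B l}"
      using closed[OF C] by (force simp: switch_on_def lit_true_def)
    then show ?thesis using B C by (simp add: sat_assignments_def satisfies_1ink_def)
  qed
  ultimately show ?thesis by (simp add: sat_assignments_def satisfies_1ink_def)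
qed

text \<open>Walk from A to B by switching the components of x_0, x_1, ..., x_(n-1) in turn; the
  j-th step changes only variables in the component of x_j.\<close>
lemma small_components_connected:
  assumes cls: "set \<Phi> \<subseteq> clauses n k"
    and A: "A \<in> sat_assignments n \<Phi>" and B: "B \<in> sat_assignments n \<Phi>"
    and small: "\<forall>v<n. card (component \<Phi> v) \<le> L"
  shows "l_connected n \<Phi> L A B"
proof -
  define U where "U j = (\<Union>v<j. component \<Phi> v)" for j
  define H where "H j = switch_on (U j) A B" for j
  define As where "As = map H [0..<Suc n]"
  have "H j \<in> sat_assignments n \<Phi>" for j
    unfolding H_def
  proof (rule switch_on_sat[OF A B])
    fix C assume C: "C \<in> set \<Phi>" "fst ` C \<inter> U j \<noteq> {}"
    then obtain a v where "v < j" "a \<in> fst ` C" "a \<in> component \<Phi> v" by (auto simp: U_def)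
    then have "fst ` C \<subseteq> component \<Phi> v" using clause_in_component[OF _ C(1)] by blast
    then show "fst ` C \<subseteq> U j" using \<open>v < j\<close> by (auto simp: U_def)
  qed
  then have "set As \<subseteq> sat_assignments n \<Phi>" by (auto simp: As_def)
  moreover have "hd As = A"
  proof -
    have "hd As = H 0" by (simp add: As_def upt_conv_Cons del: upt_Suc)
    also have "H 0 = A" by (simp add: H_def U_def switch_on_def)
    finally show ?thesis .
  qed
  moreover have "last As = B"
  proof
    fix i
    have "last As = H n" by (simp add: As_def last_map)
    moreover have "H n i = B i"
    proof (cases "i < n")
      case True
      then have "i \<in> U n" using component_self[of i \<Phi>] by (auto simp: U_def)
      then show ?thesis by (simp add: H_def switch_on_def)
    next
      case False
      then show ?thesis using A B by (simp add: H_def switch_on_def sat_assignments_def assignments_def)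
    qed
    ultimately show "last As i = B i" by simp
  qed
  moreover have "hamming n (As ! i) (As ! Suc i) \<le> L" if i: "Suc i < length As" for i
  proof -
    have "As ! i = H i" "As ! Suc i = H (Suc i)" using i
      by (simp_all add: As_def del: upt_Suc)
    moreover have "{x. x < n \<and> H i x \<noteq> H (Suc i) x} \<subseteq> component \<Phi> i"
      by (auto simp: H_def U_def switch_on_def lessThan_Suc split: if_splits)
    then have "card {x. x < n \<and> H i x \<noteq> H (Suc i) x} \<le> card (component \<Phi> i)"
      by (intro card_mono finite_component[OF cls])
    moreover have "i < n" using i by (simp add: As_def)
    ultimately show ?thesis using small unfolding hamming_def by (metis order_trans)
  qed
  moreover have "As \<noteq> []" by (simp add: As_def)
  ultimately show ?thesis unfolding l_connected_def by blast
qed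

section \<open>Exploring a component\<close>

text \<open>E lists the explored variables,
  D \<supseteq> set E the discovered ones, and \<Phi> holds the clauses not yet revealed (those avoiding E).
  A step picks an unexplored discovered variable u, reveals the clauses containing u and
  discovers their variables.  explore r E D \<Phi> counts the clauses revealed in r steps.\<close>
fun explore :: "nat \<Rightarrow> nat list \<Rightarrow> nat set \<Rightarrow> clause list \<Rightarrow> nat" where
  "explore 0 E D \<Phi> = 0"
| "explore (Suc r) E D \<Phi> = (if D - set E = {} then 0 else
    (let u = (SOME u. u \<in> D - set E) in
     length (filter (\<lambda>C. u \<in> fst ` C) \<Phi>) +
     explore r (E @ [u]) (D \<union> (\<Union>C\<in>set (filter (\<lambda>C. u \<in> fst ` C) \<Phi>). fst ` C))
        (filter (\<lambda>C. u \<notin> fst ` C) \<Phi>)))"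

definition explore_inv :: "clause list \<Rightarrow> nat \<Rightarrow> nat list \<Rightarrow> nat set \<Rightarrow> bool" where
  "explore_inv \<Phi>0 v E D \<longleftrightarrow> v \<in> D \<and> set E \<subseteq> D \<and> D \<subseteq> component \<Phi>0 v \<and> finite D \<and>
     distinct E \<and> (\<forall>C\<in>set \<Phi>0. fst ` C \<inter> set E \<noteq> {} \<longrightarrow> fst ` C \<subseteq> D)"

lemma explore_inv_start: "explore_inv \<Phi>0 v [] {v}"
  by (simp add: explore_inv_def component_self)

lemma explore_inv_step:
  assumes cls: "set \<Phi>0 \<subseteq> clauses n k" and inv: "explore_inv \<Phi>0 v E D"
    and u: "u \<in> D" "u \<notin> set E"
    and T: "T = filter (\<lambda>C. u \<in> fst ` C) (filter (\<lambda>C. fst ` C \<inter> set E = {}) \<Phi>0)"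
  shows "explore_inv \<Phi>0 v (E @ [u]) (D \<union> (\<Union>C\<in>set T. fst ` C))"
proof -
  have "u \<in> component \<Phi>0 v" using u inv by (auto simp: explore_inv_def)
  then have "fst ` C \<subseteq> component \<Phi>0 v" if "C \<in> set T" for C
    using that clause_in_component by (auto simp: T)
  moreover have "finite (fst ` C)" if "C \<in> set T" for C
    using that cls by (auto simp: T clauses_def)
  moreover have "fst ` C \<subseteq> D \<union> (\<Union>C\<in>set T. fst ` C)"
    if C: "C \<in> set \<Phi>0" "fst ` C \<inter> set (E @ [u]) \<noteq> {}" for C
  proof (cases "fst ` C \<inter> set E = {}")
    case True
    then have "C \<in> set T" using C by (auto simp: T)
    then show ?thesis by auto
  next
    case False
    then show ?thesis using C(1) inv unfolding explore_inv_def by blast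
  qed
  ultimately show ?thesis using inv u by (auto simp: explore_inv_def)
qed

lemma explore_inv_exhausted:
  assumes "explore_inv \<Phi>0 v E D" and "D - set E = {}"
  shows "component \<Phi>0 v \<subseteq> D"
  using assms by (intro component_subset_closed) (auto simp: explore_inv_def)

lemma card_reveal_le:
  assumes "u \<in> D" and T: "\<And>C. C \<in> set T \<Longrightarrow> C \<in> clauses n k \<and> u \<in> fst ` C"
  shows "card (D \<union> (\<Union>C\<in>set T. fst ` C)) \<le> card D + (k-1) * length T"
proof -
  have "D \<union> (\<Union>C\<in>set T. fst ` C) = D \<union> (\<Union>C\<in>set T. fst ` C - {u})" using assms(1) by auto
  then have "card (D \<union> (\<Union>C\<in>set T. fst ` C)) \<le> card D + card (\<Union>C\<in>set T. fst ` C - {u})"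
    by (metis card_Un_le)
  also have "card (\<Union>C\<in>set T. fst ` C - {u}) \<le> (\<Sum>C\<in>set T. card (fst ` C - {u}))"
    by (rule card_UN_le) simp
  also have "\<dots> = (\<Sum>C\<in>set T. k - 1)"
    using T by (intro sum.cong) (auto simp: clauses_def card_Diff_singleton)
  also have "\<dots> \<le> length T * (k-1)" using card_length[of T] by simp
  finally show ?thesis by (simp add: mult.commute)
qed

text \<open>The main invariant of the exploration, with t the number of clauses revealed so far:
  while the component of v is not exhausted, each step explores one new variable, and
  every discovered variable is v or lies in one of the revealed clauses (at most k-1 new
  variables per clause).\<close>
lemma explore_bound:
  assumes cls: "set \<Phi>0 \<subseteq> clauses n k"
  shows "explore_inv \<Phi>0 v E D \<Longrightarrow> \<Phi> = filter (\<lambda>C. fst ` C \<inter> set E = {}) \<Phi>0 \<Longrightarrow>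
    card D \<le> 1 + (k-1)*t \<Longrightarrow> length E + r < card (component \<Phi>0 v) \<Longrightarrow>
    length E + r \<le> 1 + (k-1)*(t + explore r E D \<Phi>)"
proof (induction r arbitrary: E D t \<Phi>)
  case 0
  then have "length E = card (set E)" by (simp add: explore_inv_def distinct_card)
  also have "\<dots> \<le> card D" using "0.prems"(1) by (intro card_mono) (auto simp: explore_inv_def)
  finally show ?case using "0.prems" by simp
next
  case (Suc r)
  show ?case
  proof (cases "D - set E = {}")
    case True
    then have "card (component \<Phi>0 v) \<le> card D"
      using Suc.prems(1) explore_inv_exhausted
      by (intro card_mono) (auto simp: explore_inv_def)
    also have "\<dots> = length E" using True Suc.prems(1)
      by (metis Diff_eq_empty_iff distinct_card explore_inv_def subset_antisym)
    finally show ?thesis using Suc.prems by simp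
  next
    case False
    define u where "u = (SOME u. u \<in> D - set E)"
    have u: "u \<in> D" "u \<notin> set E" using False someI_ex[of "\<lambda>u. u \<in> D - set E"] by (auto simp: u_def)
    define T where "T = filter (\<lambda>C. u \<in> fst ` C) \<Phi>"
    define D' where "D' = D \<union> (\<Union>C\<in>set T. fst ` C)"
    have ex: "explore (Suc r) E D \<Phi> = length T + explore r (E @ [u]) D' (filter (\<lambda>C. u \<notin> fst ` C) \<Phi>)"
      unfolding explore.simps if_not_P[OF False] Let_def u_def[symmetric] T_def D'_def ..
    have "card D' \<le> card D + (k-1) * length T"
      unfolding D'_def using u(1) cls Suc.prems(2) by (intro card_reveal_le) (auto simp: T_def)
    then have "card D' \<le> 1 + (k-1)*(t + length T)" using Suc.prems(3) by (simp add: algebra_simps)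
    moreover have "explore_inv \<Phi>0 v (E @ [u]) D'"
      unfolding D'_def by (rule explore_inv_step[OF cls Suc.prems(1) u]) (simp add: T_def Suc.prems(2))
    moreover have "filter (\<lambda>C. u \<notin> fst ` C) \<Phi> = filter (\<lambda>C. fst ` C \<inter> set (E @ [u]) = {}) \<Phi>0"
      using Suc.prems(2) by simp (intro filter_cong; auto)
    ultimately have "length (E @ [u]) + r \<le> 1 + (k-1)*((t + length T) +
        explore r (E @ [u]) D' (filter (\<lambda>C. u \<notin> fst ` C) \<Phi>))"
      using Suc.prems(4) by (intro Suc.IH) auto
    then show ?thesis using ex by (simp add: algebra_simps)
  qed
qed

lemma large_component_explore:
  assumes cls: "set \<Phi> \<subseteq> clauses n k" and L: "L < card (component \<Phi> v)"
  shows "L \<le> 1 + (k-1) * explore L [] {v} \<Phi>"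
  using explore_bound[OF cls, where E="[]" and D="{v}" and t=0 and r=L and \<Phi>=\<Phi> and v=v]
    explore_inv_start[of \<Phi> v] L by simp

section \<open>Counting clauses\<close>

lemma finite_clauses: "finite (clauses n k)"
proof -
  have "clauses n k \<subseteq> Pow ({..<n} \<times> UNIV)" by (auto simp: clauses_def)
  then show ?thesis by (rule finite_subset) auto
qed

lemma clauses_nonempty:
  assumes "k \<le> n" shows "clauses n k \<noteq> {}"
proof -
  define C0 where "C0 = (\<lambda>i. (i, True)) ` {..<k}"
  have "card C0 = k" unfolding C0_def by (subst card_image) (auto simp: inj_on_def)
  moreover have "fst ` C0 = {..<k}" by (force simp: C0_def image_image)
  ultimately have "C0 \<in> clauses n k" using assms by (auto simp: clauses_def C0_def)
  then show ?thesis by auto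
qed

definition rename_clause :: "nat \<Rightarrow> nat \<Rightarrow> clause \<Rightarrow> clause" where
  "rename_clause u w C = map_prod (Transposition.transpose u w) id ` C"

lemma rename_clause_involutory [simp]: "rename_clause u w (rename_clause u w C) = C"
  by (force simp: rename_clause_def image_image map_prod_def case_prod_beta)

lemma fst_rename_clause: "fst ` rename_clause u w C = Transposition.transpose u w ` fst ` C"
  by (force simp: rename_clause_def image_image)

lemma rename_clause_in_clauses:
  assumes "u < n" "w < n" "C \<in> clauses n k" shows "rename_clause u w C \<in> clauses n k"
proof -
  have "inj (map_prod (Transposition.transpose u w) (id :: bool \<Rightarrow> bool))"
    by (metis inj_transpose inj_on_id map_prod_inj_on UNIV_Times_UNIV)
  then have "card (rename_clause u w C) = card C"
    unfolding rename_clause_def by (meson card_image inj_on_subset subset_UNIV)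
  moreover have "card (fst ` rename_clause u w C) = card (fst ` C)"
    unfolding fst_rename_clause by (meson card_image inj_on_subset subset_UNIV inj_transpose)
  moreover have "fst ` rename_clause u w C \<subseteq> {..<n}"
    using assms unfolding fst_rename_clause clauses_def by (auto simp: Transposition.transpose_def)
  ultimately show ?thesis using assms by (simp add: clauses_def rename_clause_def)
qed

text \<open>By symmetry, every variable lies in the same number of clauses ...\<close>
lemma card_clauses_containing_sym:
  assumes "u < n" "w < n"
  shows "card {C \<in> clauses n k. u \<in> fst ` C} \<le> card {C \<in> clauses n k. w \<in> fst ` C}"
proof (rule card_inj_on_le)
  show "inj_on (rename_clause u w) {C \<in> clauses n k. u \<in> fst ` C}"
    by (metis rename_clause_involutory inj_onI)
  show "rename_clause u w ` {C \<in> clauses n k. u \<in> fst ` C} \<subseteq> {C \<in> clauses n k. w \<in> fst ` C}"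
  proof
    fix D assume "D \<in> rename_clause u w ` {C \<in> clauses n k. u \<in> fst ` C}"
    then obtain C where C: "C \<in> clauses n k" "u \<in> fst ` C" "D = rename_clause u w C" by auto
    have "w \<in> fst ` D"
      unfolding C(3) fst_rename_clause using imageI[OF C(2), of "Transposition.transpose u w"] by simp
    then show "D \<in> {C \<in> clauses n k. w \<in> fst ` C}" using C assms by (simp add: rename_clause_in_clauses)
  qed
  show "finite {C \<in> clauses n k. w \<in> fst ` C}" using finite_clauses by simp
qed

lemma sum_clauses_containing:
  "(\<Sum>w<n. card {C \<in> clauses n k. w \<in> fst ` C}) = k * card (clauses n k)"
proof -
  have "(\<Sum>w<n. card {C \<in> clauses n k. w \<in> fst ` C}) =
        (\<Sum>w<n. \<Sum>C\<in>clauses n k. if w \<in> fst ` C then 1 else 0)"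
    using finite_clauses by (simp add: sum.inter_filter[symmetric])
  also have "\<dots> = (\<Sum>C\<in>clauses n k. \<Sum>w<n. if w \<in> fst ` C then 1 else 0)" by (rule sum.swap)
  also have "\<dots> = (\<Sum>C\<in>clauses n k. card {w\<in>{..<n}. w \<in> fst ` C})"
    by (simp add: sum.inter_filter[symmetric])
  also have "\<dots> = (\<Sum>C\<in>clauses n k. k)"
  proof (rule sum.cong)
    fix C assume "C \<in> clauses n k"
    then have "{w\<in>{..<n}. w \<in> fst ` C} = fst ` C" "card (fst ` C) = k" by (auto simp: clauses_def)
    then show "card {w\<in>{..<n}. w \<in> fst ` C} = k" by simp
  qed simp
  finally show ?thesis by simp
qed

lemma card_clauses_containing:
  assumes "n > 0"
  shows "real (card {C \<in> clauses n k. u \<in> fst ` C}) \<le> real k * card (clauses n k) / n"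
proof (cases "u < n")
  case True
  have "card {C \<in> clauses n k. w \<in> fst ` C} = card {C \<in> clauses n k. u \<in> fst ` C}" if "w < n" for w
    using card_clauses_containing_sym[OF True that] card_clauses_containing_sym[OF that True]
    by (rule antisym[rotated])
  then have "n * card {C \<in> clauses n k. u \<in> fst ` C} = k * card (clauses n k)"
    using sum_clauses_containing[of n k] by simp
  then have "real n * card {C \<in> clauses n k. u \<in> fst ` C} = real k * card (clauses n k)"
    by (metis of_nat_mult)
  then show ?thesis using assms by (simp add: field_simps)
next
  case False
  then have "{C \<in> clauses n k. u \<in> fst ` C} = {}" by (auto simp: clauses_def)
  then show ?thesis by (simp only: card.empty of_nat_0) simp
qed

section \<open>The first moment of the exploration\<close>

definition avoiding :: "nat \<Rightarrow> nat \<Rightarrow> nat list \<Rightarrow> clause set" where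
  "avoiding n k E = {C \<in> clauses n k. fst ` C \<inter> set E = {}}"

lemma finite_avoiding: "finite (avoiding n k E)"
  using finite_clauses by (simp add: avoiding_def)

lemma card_avoiding_snoc:
  "card (avoiding n k E) = card {C\<in>avoiding n k E. u \<in> fst ` C} + card (avoiding n k (E @ [u]))"
proof -
  have "avoiding n k E = {C\<in>avoiding n k E. u \<in> fst ` C} \<union> avoiding n k (E @ [u])"
    "{C\<in>avoiding n k E. u \<in> fst ` C} \<inter> avoiding n k (E @ [u]) = {}"
    by (auto simp: avoiding_def)
  then show ?thesis using finite_avoiding by (metis card_Un_disjoint finite_Un)
qed

text \<open>Each exploration step reveals the clauses through one variable u; the lemma
  sum_lists_len_filter_le separates them from the rest, which are handled by induction.\<close>
lemma explore_moment_bound: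
  fixes lam \<alpha> :: real
  assumes lam: "lam \<ge> 1" and alpha: "\<And>u. card {C \<in> clauses n k. u \<in> fst ` C} \<le> \<alpha>"
  shows "(\<Sum>\<Phi>\<in>lists_len (avoiding n k E) m. lam ^ explore r E D \<Phi>)
           \<le> (card (avoiding n k E) + (lam-1)*r*\<alpha>)^m"
proof (induction r arbitrary: E D m)
  case 0
  show ?case using finite_avoiding by (simp add: card_lists_length_eq)
next
  case (Suc r)
  have \<alpha>0: "\<alpha> \<ge> 0" using alpha[of 0] by (meson of_nat_0_le_iff order_trans)
  show ?case
  proof (cases "D - set E = {}")
    case True
    then have "(\<Sum>\<Phi>\<in>lists_len (avoiding n k E) m. lam ^ explore (Suc r) E D \<Phi>) = card (avoiding n k E) ^ m"
      using finite_avoiding by (simp add: card_lists_length_eq)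
    also have "\<dots> \<le> (card (avoiding n k E) + (lam-1)*Suc r*\<alpha>)^m"
      using lam \<alpha>0 unfolding of_nat_power by (intro power_mono) auto
    finally show ?thesis .
  next
    case False
    define u where "u = (SOME u. u \<in> D - set E)"
    define P where "P = (\<lambda>C::clause. u \<in> fst ` C)"
    define h where "h = (\<lambda>(T::clause list) R. lam ^ explore r (E @ [u]) (D \<union> (\<Union>C\<in>set T. fst ` C)) R)"
    define K where "K = card (avoiding n k (E @ [u])) + (lam-1)*r*\<alpha>"
    define q where "q = card {C\<in>avoiding n k E. P C}"
    have step: "explore (Suc r) E D \<Phi> = length (filter P \<Phi>) +
              explore r (E @ [u]) (D \<union> (\<Union>C\<in>set (filter P \<Phi>). fst ` C)) (filter (\<lambda>C. \<not> P C) \<Phi>)" for \<Phi>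
      unfolding explore.simps if_not_P[OF False] Let_def u_def[symmetric] P_def ..
    have rest: "{C \<in> avoiding n k E. \<not> P C} = avoiding n k (E @ [u])" by (auto simp: avoiding_def P_def)
    have "(\<Sum>\<Phi>\<in>lists_len (avoiding n k E) m. lam ^ explore (Suc r) E D \<Phi>) = (\<Sum>\<Phi>\<in>lists_len (avoiding n k E) m.
            lam ^ length (filter P \<Phi>) * h (filter P \<Phi>) (filter (\<lambda>x. \<not> P x) \<Phi>))"
      by (simp only: step h_def power_add)
    also have "\<dots> \<le> 1 * (lam * q + K) ^ m"
      unfolding q_def
      by (rule sum_lists_len_filter_le[OF finite_avoiding]) (use lam Suc.IH in \<open>simp_all add: rest h_def K_def\<close>)
    also have "\<dots> \<le> (card (avoiding n k E) + (lam-1)*Suc r*\<alpha>)^m"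
      unfolding mult_1
    proof (intro power_mono)
      have "q \<le> card {C \<in> clauses n k. u \<in> fst ` C}"
        unfolding q_def using finite_clauses by (intro card_mono) (auto simp: avoiding_def P_def)
      then have "(lam-1) * q \<le> (lam-1) * \<alpha>" using alpha[of u] lam by (intro mult_left_mono) auto
      then show "lam * q + K \<le> card (avoiding n k E) + (lam-1)*Suc r*\<alpha>"
        using card_avoiding_snoc[of n k E u] by (simp add: K_def q_def P_def algebra_simps)
      show "0 \<le> lam * q + K" using lam \<alpha>0 by (simp add: K_def)
    qed
    finally show ?thesis by simp
  qed
qed

section \<open>Large components are unlikely\<close>

lemma instances_eq: "instances n k m = lists_len (clauses n k) m"
  by (auto simp: instances_def)

text \<open>Markov's inequality for the exploration count: an instance in which the component of v
  has more than L variables has weight at least lam^((L-1)/(k-1)), while by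
  explore_moment_bound the total weight is small.\<close>
lemma count_large_component:
  fixes lam :: real
  assumes k: "k \<ge> 2" and n: "n > 0" and lam: "lam \<ge> 1"
  shows "card {\<Phi> \<in> instances n k m. L < card (component \<Phi> v)} * lam powr ((real L - 1)/(real k - 1))
         \<le> card (clauses n k)^m * (1 + (lam-1)*L*k/n)^m"
proof -
  define Bad where "Bad = {\<Phi> \<in> instances n k m. L < card (component \<Phi> v)}"
  define lp where "lp = lam powr ((real L - 1)/(real k - 1))"
  have weight: "lp \<le> lam ^ explore L [] {v} \<Phi>" if "\<Phi> \<in> Bad" for \<Phi>
  proof -
    have cls: "set \<Phi> \<subseteq> clauses n k" using that by (auto simp: Bad_def instances_def)
    have "L \<le> 1 + (k-1) * explore L [] {v} \<Phi>"
      using large_component_explore[OF cls] that by (simp add: Bad_def)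
    then have "real L \<le> real (1 + (k-1) * explore L [] {v} \<Phi>)" by (simp only: of_nat_le_iff)
    also have "\<dots> = 1 + (real k - 1) * explore L [] {v} \<Phi>" using k by (simp add: of_nat_diff)
    finally have "real L \<le> 1 + (real k - 1) * explore L [] {v} \<Phi>" .
    then have "(real L - 1)/(real k - 1) \<le> real (explore L [] {v} \<Phi>)" using k
      by (simp add: divide_le_eq mult.commute)
    then have "lp \<le> lam powr real (explore L [] {v} \<Phi>)" unfolding lp_def using lam by (intro powr_mono) auto
    then show ?thesis using lam by (simp add: powr_realpow)
  qed
  have "card Bad * lp = (\<Sum>\<Phi>\<in>Bad. lp)" by simp
  also have "\<dots> \<le> (\<Sum>\<Phi>\<in>Bad. lam ^ explore L [] {v} \<Phi>)" using weight by (intro sum_mono) auto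
  also have "\<dots> \<le> (\<Sum>\<Phi>\<in>lists_len (avoiding n k []) m. lam ^ explore L [] {v} \<Phi>)"
    using lam finite_clauses
    by (intro sum_mono2) (auto simp: Bad_def instances_eq avoiding_def finite_lists_length_eq)
  also have "\<dots> \<le> (card (clauses n k) + (lam-1)*L*(real k * card (clauses n k) / n))^m"
    using explore_moment_bound[where n=n and k=k and E="[]" and r=L and D="{v}" and m=m,
        OF lam card_clauses_containing[OF n]]
    by (simp add: avoiding_def)
  also have "\<dots> = card (clauses n k)^m * (1 + (lam-1)*L*k/n)^m"
    by (simp add: algebra_simps flip: power_mult_distrib)
  finally show ?thesis by (simp add: Bad_def lp_def)
qed

lemma power_one_plus_div_le_exp:
  fixes a c :: real and m n :: nat
  assumes m: "real m \<le> c * n" and n: "n > 0" and a: "a \<ge> 0"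
  shows "(1 + a / n) ^ m \<le> exp (c * a)"
proof -
  have "(1 + a / n) ^ m \<le> exp (a / n) ^ m"
    using a by (intro power_mono) simp_all
  also have "\<dots> = exp (real m * (a / n))" by (rule exp_of_nat_mult[symmetric])
  also have "\<dots> \<le> exp ((c * n) * (a / n))"
    using m a by (intro exp_mono mult_right_mono) auto
  also have "\<dots> = exp (c * a)" using n by simp
  finally show ?thesis .
qed

text \<open>With lam = 1/x, where x = ck(k-1) < 1, the component of a fixed variable exceeds L
  variables with probability at most K e^(-\<delta>L), \<delta> = (x - 1 - ln x)/(k-1).\<close>
lemma prob_large_component:
  fixes c :: real
  assumes k: "k \<ge> 3" and nk: "k \<le> n" and c: "c > 0" and m: "real m \<le> c * n"
    and x: "x = c * k * (real k - 1)" "x < 1"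
  shows "measure_pmf.prob (random_1ink n k m) {\<Phi>. L < card (component \<Phi> v)}
     \<le> exp (- ln x / (real k - 1)) * exp (- ((x - 1 - ln x) / (real k - 1)) * L)"
proof -
  define lam where "lam = 1 / x"
  define N where "N = card (clauses n k)"
  define lp where "lp = lam powr ((real L - 1)/(real k - 1))"
  define q where "q = 1 + (lam-1)*L*k/n"
  define I where "I = instances n k m"
  have n: "n > 0" and k1: "real k - 1 > 0" using k nk by auto
  have x0: "x > 0" using x c k by simp
  have lam1: "lam \<ge> 1" using x0 x by (simp add: lam_def)
  have lp0: "lp > 0" using lam1 by (simp add: lp_def)
  have N0: "real N ^ m > 0"
    using clauses_nonempty[OF nk] finite_clauses by (simp add: N_def card_gt_0_iff)
  have cardI: "card I = N ^ m"
    using finite_clauses by (simp add: I_def instances_eq N_def card_lists_length_eq)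
  have finI: "finite I" "I \<noteq> {}" using N0 cardI by (auto intro: card_ge_0_finite)
  have qm: "q ^ m \<le> exp (c*(lam-1)*k*L)"
    using power_one_plus_div_le_exp[OF m n, of "(lam-1)*L*k"] lam1 by (simp add: q_def mult_ac)
  have exponent: "c*(lam-1)*k*L - ln lam * ((real L - 1)/(real k - 1))
      = - ln x / (real k - 1) + (- ((x - 1 - ln x) / (real k - 1)) * L)"
  proof -
    have ck: "c * k = x / (real k - 1)" using x(1) k1 by (simp add: field_simps)
    have "c * (lam - 1) * k = (c * k) * (1 / x - 1)" by (simp add: lam_def)
    also have "\<dots> = x / (real k - 1) * (1 / x - 1)" by (simp only: ck)
    also have "\<dots> = (1 - x) / (real k - 1)" using x0 k1 by (simp add: field_simps)
    finally have "c * (lam - 1) * k = (1 - x) / (real k - 1)" .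
    moreover have "ln lam = - ln x" using x0 by (simp add: lam_def ln_div)
    moreover have "(1 - x) / d * L - (- y) * ((real L - 1) / d) = - y / d + (- ((x - 1 - y) / d) * L)"
      if "d > 0" for d y :: real
      using that by (simp add: field_simps)
    ultimately show ?thesis using k1 by simp
  qed
  have "measure_pmf.prob (random_1ink n k m) {\<Phi>. L < card (component \<Phi> v)}
      = card {\<Phi> \<in> I. L < card (component \<Phi> v)} / N ^ m"
    unfolding random_1ink_def I_def[symmetric] measure_pmf_of_set[OF finI(2,1)] cardI
    by (simp add: Int_def)
  also have "\<dots> = (card {\<Phi> \<in> I. L < card (component \<Phi> v)} * lp) / (N ^ m * lp)"
    using lp0 by simp
  also have "\<dots> \<le> (N ^ m * q ^ m) / (N ^ m * lp)"
    using count_large_component[of k n lam m L v] k n lam1 lp0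
    by (intro divide_right_mono) (simp_all add: I_def lp_def q_def N_def)
  also have "\<dots> = q ^ m / lp" using N0 lp0 by (simp add: field_simps)
  also have "\<dots> \<le> exp (c*(lam-1)*k*L) / lp" using qm lp0 by (intro divide_right_mono) auto
  also have "lp = exp (ln lam * ((real L - 1)/(real k - 1)))"
    using lam1 by (simp add: lp_def powr_def)
  also have "exp (c*(lam-1)*k*L) / exp (ln lam * ((real L - 1)/(real k - 1)))
      = exp (- ln x / (real k - 1)) * exp (- ((x - 1 - ln x) / (real k - 1)) * L)"
    by (simp only: exp_diff[symmetric] exponent exp_add)
  finally show ?thesis .
qed

section \<open>All components are small with high probability\<close>

text \<open>Strict form of ln x \<le> x - 1; it makes the decay rate \<delta> positive.\<close>
lemma ln_less_minus_one:
  fixes x :: real assumes "0 < x" "x \<noteq> 1" shows "ln x < x - 1"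
  using ln_le_minus_one[OF assms(1)] ln_eq_minus_one[OF assms(1)] assms(2) by fastforce

lemma exp_neg_log_threshold:
  fixes \<delta> :: real
  assumes \<delta>: "\<delta> > 0" and n: "n > 0"
  shows "exp (- \<delta> * nat \<lfloor>(2/\<delta>) * ln (real n)\<rfloor>) \<le> exp \<delta> / (real n * real n)"
proof -
  define L where "L = nat \<lfloor>(2/\<delta>) * ln (real n)\<rfloor>"
  have "real L \<ge> (2/\<delta>) * ln (real n) - 1" using n \<delta> by (simp add: L_def)
  then have "\<delta> * L \<ge> \<delta> * ((2/\<delta>) * ln (real n) - 1)" using \<delta> by (intro mult_left_mono) auto
  also have "\<delta> * ((2/\<delta>) * ln (real n) - 1) = ln n + ln n - \<delta>" using \<delta> by (simp add: field_simps)
  finally have "exp (- \<delta> * L) \<le> exp (\<delta> - ln n - ln n)" by simp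
  also have "\<dots> = exp \<delta> / (real n * real n)"
    using n by (simp only: exp_diff exp_ln of_nat_0_less_iff) (simp add: divide_divide_eq_left)
  finally show ?thesis by (simp add: L_def)
qed

text \<open>A union bound over the n variables: with L = \<lfloor>(2/\<delta>) ln n\<rfloor>, each component is
  too large with probability O(1/n^2), so all components have at most L variables, and
  hence all solutions are L-connected, with probability 1 - O(1/n).\<close>
lemma prob_small_components:
  fixes c :: real
  assumes k: "k \<ge> 3" and nk: "k \<le> n" and c: "c > 0"
    and x: "x = c * k * (real k - 1)" "x < 1"
    and \<delta>: "\<delta> = (x - 1 - ln x) / (real k - 1)" "\<delta> > 0"
  shows "measure_pmf.prob (random_1ink n k (nat \<lfloor>c * real n\<rfloor>))
        {\<Phi>. \<forall>A\<in>sat_assignments n \<Phi>. \<forall>B\<in>sat_assignments n \<Phi>.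
              l_connected n \<Phi> (nat \<lfloor>(2/\<delta>) * ln (real n)\<rfloor>) A B}
     \<ge> 1 - exp (- ln x / (real k - 1)) * exp \<delta> / n"
proof -
  define m where "m = nat \<lfloor>c * real n\<rfloor>"
  define L where "L = nat \<lfloor>(2/\<delta>) * ln (real n)\<rfloor>"
  define M where "M = random_1ink n k m"
  define G where "G = {\<Phi>. \<forall>A\<in>sat_assignments n \<Phi>. \<forall>B\<in>sat_assignments n \<Phi>. l_connected n \<Phi> L A B}"
  define Bad where "Bad v = {\<Phi>. L < card (component \<Phi> v)}" for v
  define K where "K = exp (- ln x / (real k - 1)) * exp \<delta>"
  have n: "n > 0" using k nk by simp
  have bad: "measure_pmf.prob M (Bad v) \<le> K / (real n * real n)" for v
  proof -
    have "measure_pmf.prob M (Bad v) \<le> exp (- ln x / (real k - 1)) * exp (- \<delta> * L)"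
      using prob_large_component[OF k nk c _ x, of m L v] c \<delta>(1) by (simp add: M_def Bad_def m_def)
    also have "\<dots> \<le> exp (- ln x / (real k - 1)) * (exp \<delta> / (real n * real n))"
      using exp_neg_log_threshold[OF \<delta>(2) n] by (intro mult_left_mono) (auto simp: L_def)
    finally show ?thesis by (simp add: K_def)
  qed
  obtain C0 where "C0 \<in> clauses n k" using clauses_nonempty[OF nk] by blast
  then have "replicate m C0 \<in> instances n k m" by (auto simp: instances_def)
  then have finI: "finite (instances n k m)" "instances n k m \<noteq> {}"
    using finite_clauses by (auto simp: instances_eq finite_lists_length_eq)
  have "AE \<Phi> in M. \<Phi> \<in> UNIV - G \<longrightarrow> \<Phi> \<in> (\<Union>v<n. Bad v)"
  proof (rule AE_pmfI)
    fix \<Phi> assume "\<Phi> \<in> set_pmf M"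
    then have cls: "set \<Phi> \<subseteq> clauses n k"
      using finI by (simp add: M_def random_1ink_def instances_def)
    show "\<Phi> \<in> UNIV - G \<longrightarrow> \<Phi> \<in> (\<Union>v<n. Bad v)"
    proof
      assume "\<Phi> \<in> UNIV - G"
      then have "\<not> (\<forall>v<n. card (component \<Phi> v) \<le> L)"
        using small_components_connected[OF cls] unfolding G_def by blast
      then show "\<Phi> \<in> (\<Union>v<n. Bad v)" by (auto simp: Bad_def not_le)
    qed
  qed
  then have "measure_pmf.prob M (UNIV - G) \<le> measure_pmf.prob M (\<Union>v<n. Bad v)"
    by (intro measure_pmf.finite_measure_mono_AE) auto
  also have "\<dots> \<le> (\<Sum>v<n. measure_pmf.prob M (Bad v))"
    by (intro measure_pmf.finite_measure_subadditive_finite) auto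
  also have "\<dots> \<le> (\<Sum>v<n. K / (real n * real n))" by (intro sum_mono bad)
  also have "\<dots> = K / n" using n by simp
  finally have "1 - K / n \<le> measure_pmf.prob M G"
    using measure_pmf.prob_compl[of G M] by simp
  then show ?thesis unfolding m_def L_def G_def K_def M_def .
qed

lemma tendsto_one_squeeze:
  fixes f :: "nat \<Rightarrow> real"
  assumes "\<forall>\<^sub>F n in sequentially. 1 - K / real n \<le> f n \<and> f n \<le> 1"
  shows "f \<longlonglongrightarrow> 1"
proof (rule tendsto_sandwich[where f="\<lambda>n. 1 - K / real n" and h="\<lambda>n. 1"])
  show "(\<lambda>n. 1 - K / real n) \<longlonglongrightarrow> 1"
    using tendsto_diff[OF tendsto_const lim_const_over_n[of K]] by simp
qed (use assms in \<open>auto elim: eventually_mono\<close>)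

theorem theorem1:
  fixes k :: nat and c :: real
  assumes "k \<ge> 3" and "0 < c" and "c < 1 / (real k * (real k - 1))"
  shows "\<exists>\<gamma>::real. \<gamma> > 0 \<and>
    (\<lambda>n. measure_pmf.prob (random_1ink n k (nat \<lfloor>c * real n\<rfloor>))
        {\<Phi>. \<forall>A\<in>sat_assignments n \<Phi>. \<forall>B\<in>sat_assignments n \<Phi>.
              l_connected n \<Phi> (nat \<lfloor>\<gamma> * ln (real n)\<rfloor>) A B})
    \<longlonglongrightarrow> 1"
proof -
  define x where "x = c * k * (real k - 1)"
  define \<delta> where "\<delta> = (x - 1 - ln x) / (real k - 1)"
  have k1: "real k - 1 > 0" using assms by simp
  have x: "0 < x" "x < 1" using assms k1 by (simp_all add: x_def field_simps)
  then have \<delta>: "\<delta> > 0" using ln_less_minus_one[of x] k1 by (simp add: \<delta>_def)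
  have "\<forall>\<^sub>F n in sequentially.
          1 - exp (- ln x / (real k - 1)) * exp \<delta> / real n
            \<le> measure_pmf.prob (random_1ink n k (nat \<lfloor>c * real n\<rfloor>))
                {\<Phi>. \<forall>A\<in>sat_assignments n \<Phi>. \<forall>B\<in>sat_assignments n \<Phi>.
                      l_connected n \<Phi> (nat \<lfloor>(2/\<delta>) * ln (real n)\<rfloor>) A B}
          \<and> measure_pmf.prob (random_1ink n k (nat \<lfloor>c * real n\<rfloor>))
                {\<Phi>. \<forall>A\<in>sat_assignments n \<Phi>. \<forall>B\<in>sat_assignments n \<Phi>.
                      l_connected n \<Phi> (nat \<lfloor>(2/\<delta>) * ln (real n)\<rfloor>) A B} \<le> 1"
    using eventually_ge_at_top[of k]
    by eventually_elim (use prob_small_components[OF assms(1) _ assms(2) x_def x(2) \<delta>_def \<delta>] in auto)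
  then show ?thesis using \<delta> by (intro exI[of _ "2/\<delta>"]) (simp add: tendsto_one_squeeze)
qed

end
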